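(* Let $R=\bigoplus_{i\ge 0}R_i$ be a graded domain of Krull dimension $d$. Let $S\subset R_0$ be a multiplicative set such that $S\cap \mathfrak m\neq\emptyset$ for every maximal ideal $\mathfrak m$ of $R_0$. Then the graded ring $S^{-1}R=\bigoplus_{i\ge0}S^{-1}R_i$ has no graded maximal ideal of the form $S^{-1}\mathfrak M$ with $\mathfrak M$ a maximal ideal of $R$. Consequently $\dim(S^{-1}R)<d$.
   Context: All rings are commutative Noetherian with $1\neq 0$ and of finite Krull dimension. A graded ring means a ring $R=\bigoplus_{i\ge0}R_i$ with a non-trivial $\mathbb N$-grading, i.e. the irrelevant ideal $R_+=\bigoplus_{i\ge1}R_i$ is nonzero. *)

theory Defs
  imports Main "HOL-Library.Extended_Nat"
begin

definition ideal_in :: "'a::comm_ring_1 set \<Rightarrow> 'a set \<Rightarrow> bool" where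
  "ideal_in A I \<longleftrightarrow> I \<subseteq> A \<and> 0 \<in> I \<and> (\<forall>x\<in>I. \<forall>y\<in>I. x + y \<in> I) \<and> (\<forall>x\<in>I. - x \<in> I)
     \<and> (\<forall>r\<in>A. \<forall>x\<in>I. r * x \<in> I)"

definition maximal_ideal_in :: "'a::comm_ring_1 set \<Rightarrow> 'a set \<Rightarrow> bool" where
  "maximal_ideal_in A I \<longleftrightarrow> ideal_in A I \<and> I \<noteq> A \<and>
     (\<forall>J. ideal_in A J \<and> I \<subseteq> J \<longrightarrow> J = I \<or> J = A)"

abbreviation is_ideal :: "'a::comm_ring_1 set \<Rightarrow> bool" where
  "is_ideal I \<equiv> ideal_in UNIV I"

abbreviation maximal_ideal :: "'a::comm_ring_1 set \<Rightarrow> bool" where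
  "maximal_ideal I \<equiv> maximal_ideal_in UNIV I"

definition prime_ideal :: "'a::comm_ring_1 set \<Rightarrow> bool" where
  "prime_ideal P \<longleftrightarrow> is_ideal P \<and> P \<noteq> UNIV \<and> (\<forall>a b. a * b \<in> P \<longrightarrow> a \<in> P \<or> b \<in> P)"

definition noetherian_ring :: "'a::comm_ring_1 itself \<Rightarrow> bool" where
  "noetherian_ring _ \<longleftrightarrow> (\<forall>I :: nat \<Rightarrow> 'a set. (\<forall>n. is_ideal (I n)) \<and> (\<forall>n. I n \<subseteq> I (Suc n))
      \<longrightarrow> (\<exists>n. \<forall>m\<ge>n. I m = I n))"

definition krull_dim :: "'a::comm_ring_1 itself \<Rightarrow> enat" where
  "krull_dim _ = Sup {enat n | n. \<exists>C :: nat \<Rightarrow> 'a set.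
      (\<forall>i\<le>n. prime_ideal (C i)) \<and> (\<forall>i<n. C i \<subset> C (Suc i))}"

definition hom_decomp :: "(nat \<Rightarrow> 'a::comm_ring_1 set) \<Rightarrow> 'a \<Rightarrow> (nat \<Rightarrow> 'a) \<Rightarrow> bool" where
  "hom_decomp G x c \<longleftrightarrow> (\<forall>i. c i \<in> G i) \<and> finite {i. c i \<noteq> 0} \<and> x = sum c {i. c i \<noteq> 0}"

definition graded_ring :: "(nat \<Rightarrow> 'a::comm_ring_1 set) \<Rightarrow> bool" where
  "graded_ring G \<longleftrightarrow>
     (\<forall>i. 0 \<in> G i \<and> (\<forall>x\<in>G i. \<forall>y\<in>G i. x + y \<in> G i) \<and> (\<forall>x\<in>G i. - x \<in> G i)) \<and>
     (\<forall>i j. \<forall>x\<in>G i. \<forall>y\<in>G j. x * y \<in> G (i + j)) \<and>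
     1 \<in> G 0 \<and>
     (\<forall>x. \<exists>!c. hom_decomp G x c) \<and>
     (\<exists>i\<ge>1. G i \<noteq> {0})"

definition homogeneous_ideal :: "(nat \<Rightarrow> 'a::comm_ring_1 set) \<Rightarrow> 'a set \<Rightarrow> bool" where
  "homogeneous_ideal G I \<longleftrightarrow> is_ideal I \<and> (\<forall>x\<in>I. \<forall>c. hom_decomp G x c \<longrightarrow> (\<forall>i. c i \<in> I))"

definition multiplicative_set :: "'a::comm_ring_1 set \<Rightarrow> bool" where
  "multiplicative_set S \<longleftrightarrow> 1 \<in> S \<and> (\<forall>s\<in>S. \<forall>t\<in>S. s * t \<in> S)"

text \<open>phi : R -> B exhibits B as the localization S^{-1}R (standard characterisation,
  as Mathlib's IsLocalization).\<close>
definition is_localization :: "'a::comm_ring_1 set \<Rightarrow> ('a \<Rightarrow> 'b::comm_ring_1) \<Rightarrow> bool" where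
  "is_localization S \<phi> \<longleftrightarrow>
     \<phi> 1 = 1 \<and> (\<forall>x y. \<phi> (x + y) = \<phi> x + \<phi> y) \<and> (\<forall>x y. \<phi> (x * y) = \<phi> x * \<phi> y) \<and>
     (\<forall>s\<in>S. \<phi> s dvd 1) \<and>
     (\<forall>b. \<exists>r. \<exists>s\<in>S. \<phi> s * b = \<phi> r) \<and>
     (\<forall>r. \<phi> r = 0 \<longleftrightarrow> (\<exists>s\<in>S. s * r = 0))"

text \<open>The set S^{-1}X = { r/s : r in X, s in S } inside the localization.\<close>
definition loc_set :: "'a::comm_ring_1 set \<Rightarrow> ('a \<Rightarrow> 'b::comm_ring_1) \<Rightarrow> 'a set \<Rightarrow> 'b set" where
  "loc_set S \<phi> X = {b. \<exists>r\<in>X. \<exists>s\<in>S. \<phi> s * b = \<phi> r}"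

end

theory Submission
  imports Defs
begin

text \<open>Write \<open>R\<close> for the graded ring and \<open>P\<^sup>*\<close> for the largest homogeneous ideal inside a prime \<open>P\<close>.
  A prime of \<open>S\<^sup>-\<^sup>1R\<close> contracts to a prime \<open>P\<close> of \<open>R\<close> missing \<open>S\<close>, so \<open>P \<inter> R\<^sub>0\<close> is not maximal in \<open>R\<^sub>0\<close>
  and lies strictly below some maximal ideal \<open>m\<close> of \<open>R\<^sub>0\<close>. The primes \<open>(P \<inter> R\<^sub>0) + R\<^sub>+ \<subset> m + R\<^sub>+\<close>
  contain \<open>P\<close> if \<open>P\<close> is homogeneous, and contain \<open>P\<^sup>*\<close> properly otherwise. Since no prime lies
  strictly between \<open>P\<^sup>*\<close> and \<open>P\<close>, a chain of primes of length \<open>n\<close> ending at \<open>P\<close> yields one of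
  length \<open>n - 1\<close> ending at \<open>P\<^sup>*\<close>; either way we obtain a chain of length \<open>n + 1\<close> in \<open>R\<close>, so chains in
  \<open>S\<^sup>-\<^sup>1R\<close> are shorter than \<open>d\<close>. The same extension shows that a homogeneous maximal ideal \<open>M\<close>
  of \<open>R\<close> meets \<open>R\<^sub>0\<close> in a maximal ideal (otherwise \<open>M \<subset> J + R\<^sub>+\<close> for a larger proper ideal \<open>J\<close>
  of \<open>R\<^sub>0\<close>), which is incompatible with \<open>M \<inter> S = {}\<close>.\<close>

lemma sum_mem_add_closed:
  assumes "0 \<in> A" "\<forall>x\<in>A. \<forall>y\<in>A. x + y \<in> A" "finite I" "\<forall>i\<in>I. f i \<in> A"
  shows "sum f I \<in> A"
  using assms(3,4) by (induction I rule: finite_induct) (auto simp: assms(1,2))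

lemma support_subset_lessThan:
  fixes N :: nat
  assumes "\<forall>i\<ge>N. c i = 0"
  shows "{i. c i \<noteq> 0} \<subseteq> {..<N}"
  using assms not_less by blast

lemma sum_support_eq_sum_lessThan:
  fixes N :: nat
  assumes "\<forall>i\<ge>N. c i = 0"
  shows "sum c {i. c i \<noteq> 0} = (\<Sum>i<N. c i)"
  by (rule sum.mono_neutral_left) (use support_subset_lessThan[OF assms] in auto)

lemma is_idealD:
  assumes "is_ideal I"
  shows "0 \<in> I" "x \<in> I \<Longrightarrow> y \<in> I \<Longrightarrow> x + y \<in> I" "x \<in> I \<Longrightarrow> - x \<in> I"
    "x \<in> I \<Longrightarrow> r * x \<in> I"
  using assms unfolding ideal_in_def by blast+

lemma ideal_diff_mem: "is_ideal I \<Longrightarrow> x \<in> I \<Longrightarrow> y \<in> I \<Longrightarrow> x - y \<in> I"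
  using is_idealD(2)[of I x "-y"] is_idealD(3)[of I y] by simp

lemma ideal_mult_right_mem: "is_ideal I \<Longrightarrow> x \<in> I \<Longrightarrow> x * r \<in> I"
  using is_idealD(4)[of I x r] by (simp add: mult.commute)

lemma ideal_sum_mem: "is_ideal I \<Longrightarrow> finite K \<Longrightarrow> \<forall>j\<in>K. f j \<in> I \<Longrightarrow> sum f K \<in> I"
  using sum_mem_add_closed[of I K f] is_idealD(1,2)[of I] by blast

lemma ideal_sum_not_mem:
  assumes "is_ideal I" "finite K" "k \<in> K" "f k \<notin> I" "\<forall>j\<in>K-{k}. f j \<in> I"
  shows "sum f K \<notin> I"
proof
  assume "sum f K \<in> I"
  moreover have rest: "sum f (K - {k}) \<in> I" using ideal_sum_mem[OF assms(1)] assms(2,5) by blast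
  moreover have "f k = sum f K - sum f (K - {k})" using assms(2,3) by (simp add: sum.remove)
  ultimately have "f k \<in> I" using ideal_diff_mem[OF assms(1)] by metis
  then show False using assms(4) by simp
qed

lemma prime_idealD:
  assumes "prime_ideal P"
  shows "is_ideal P" "1 \<notin> P" "a * b \<in> P \<Longrightarrow> a \<in> P \<or> b \<in> P"
proof -
  show "is_ideal P" using assms unfolding prime_ideal_def by blast
  show "1 \<notin> P"
  proof
    assume "1 \<in> P"
    then have "r \<in> P" for r using is_idealD(4)[OF \<open>is_ideal P\<close>, of 1 r] by simp
    then show False using assms unfolding prime_ideal_def by blast
  qed
  show "a * b \<in> P \<Longrightarrow> a \<in> P \<or> b \<in> P" using assms unfolding prime_ideal_def by blast
qed

lemma prime_idealI:
  assumes "is_ideal P" "1 \<notin> P" "\<And>a b. a * b \<in> P \<Longrightarrow> a \<in> P \<or> b \<in> P"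
  shows "prime_ideal P"
  using assms unfolding prime_ideal_def by blast

lemma prime_ideal_mult_mem_iff:
  "prime_ideal P \<Longrightarrow> a * b \<in> P \<longleftrightarrow> a \<in> P \<or> b \<in> P"
  using prime_idealD(1,3) is_idealD(4) ideal_mult_right_mem by blast

definition is_subring :: "'a::comm_ring_1 set \<Rightarrow> bool" where
  "is_subring A \<longleftrightarrow> 1 \<in> A \<and> (\<forall>x\<in>A. - x \<in> A) \<and> (\<forall>x\<in>A. \<forall>y\<in>A. x + y \<in> A \<and> x * y \<in> A)"

lemma ideal_inD:
  assumes "ideal_in A I"
  shows "I \<subseteq> A" "0 \<in> I" "x \<in> I \<Longrightarrow> y \<in> I \<Longrightarrow> x + y \<in> I" "x \<in> I \<Longrightarrow> - x \<in> I"
    "r \<in> A \<Longrightarrow> x \<in> I \<Longrightarrow> r * x \<in> I"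
  using assms unfolding ideal_in_def by blast+

lemma ideal_in_eq_if_one_mem:
  assumes "ideal_in A I" "1 \<in> I"
  shows "I = A"
  using ideal_inD(1)[OF assms(1)] ideal_inD(5)[OF assms(1) _ assms(2)] by fastforce

lemma ideal_in_add_multiples:
  assumes A: "is_subring A" and m: "ideal_in A m" and a: "a \<in> A"
  shows "ideal_in A {x + a * r | x r. x \<in> m \<and> r \<in> A}" (is "ideal_in A ?J")
  unfolding ideal_in_def
proof (intro conjI ballI)
  have A_closed: "x \<in> A \<Longrightarrow> - x \<in> A" "x \<in> A \<Longrightarrow> y \<in> A \<Longrightarrow> x + y \<in> A"
    "x \<in> A \<Longrightarrow> y \<in> A \<Longrightarrow> x * y \<in> A" for x y
    using A unfolding is_subring_def by blast+
  note mD = ideal_inD[OF m]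
  show "?J \<subseteq> A" using mD(1) a A_closed by blast
  show "0 \<in> ?J" using mD(1,2) by (intro CollectI exI[of _ 0] exI[of _ 0]) auto
  show "x + y \<in> ?J" if xy: "x \<in> ?J" "y \<in> ?J" for x y
  proof -
    obtain x1 r1 y1 r2 where "x = x1 + a * r1" "y = y1 + a * r2" "x1 \<in> m" "y1 \<in> m" "r1 \<in> A" "r2 \<in> A"
      using xy by blast
    then show ?thesis
      by (intro CollectI exI[of _ "x1 + y1"] exI[of _ "r1 + r2"]) (auto simp: algebra_simps mD(3) A_closed)
  qed
  show "- x \<in> ?J" if x: "x \<in> ?J" for x
  proof -
    obtain x1 r1 where "x = x1 + a * r1" "x1 \<in> m" "r1 \<in> A" using x by blast
    then show ?thesis by (intro CollectI exI[of _ "- x1"] exI[of _ "- r1"]) (auto simp: mD(4) A_closed)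
  qed
  show "r * x \<in> ?J" if rx: "r \<in> A" "x \<in> ?J" for r x
  proof -
    obtain x1 r1 where "x = x1 + a * r1" "x1 \<in> m" "r1 \<in> A" using rx(2) by blast
    then show ?thesis using rx(1)
      by (intro CollectI exI[of _ "r * x1"] exI[of _ "r * r1"]) (auto simp: algebra_simps mD(5) A_closed)
  qed
qed

lemma maximal_ideal_in_prime:
  assumes A: "is_subring A" and m: "maximal_ideal_in A m"
    and ab: "a \<in> A" "b \<in> A" "a * b \<in> m"
  shows "a \<in> m \<or> b \<in> m"
proof (rule ccontr)
  assume "\<not> (a \<in> m \<or> b \<in> m)"
  then have a: "a \<notin> m" and b: "b \<notin> m" by auto
  have im: "ideal_in A m" using m unfolding maximal_ideal_in_def by blast
  note mD = ideal_inD[OF im]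
  define J where "J = {x + a * r | x r. x \<in> m \<and> r \<in> A}"
  have "m \<subseteq> J"
  proof
    fix x assume "x \<in> m"
    then show "x \<in> J" unfolding J_def using mD(1,2) by (intro CollectI exI[of _ x] exI[of _ 0]) auto
  qed
  have one_A: "1 \<in> A" using A unfolding is_subring_def by blast
  have "a \<in> J" unfolding J_def using mD(2) one_A by (intro CollectI exI[of _ 0] exI[of _ 1]) simp
  moreover have "ideal_in A J" unfolding J_def by (rule ideal_in_add_multiples[OF A im ab(1)])
  ultimately have "J = A" using m a \<open>m \<subseteq> J\<close> unfolding maximal_ideal_in_def by blast
  then obtain x r where xr: "1 = x + a * r" "x \<in> m" "r \<in> A" using one_A unfolding J_def by blast
  have "b = b * x + r * (a * b)" using xr(1) by (metis mult.commute distrib_left mult.left_commute mult_1_right)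
  then have "b \<in> m" using mD(3)[OF mD(5)[OF ab(2) xr(2)] mD(5)[OF xr(3) ab(3)]] by metis
  then show False using b by simp
qed

lemma ideal_in_Union_chain:
  assumes ne: "\<C> \<noteq> {}" and ideals: "\<forall>I\<in>\<C>. ideal_in A I"
    and lin: "\<forall>X\<in>\<C>. \<forall>Y\<in>\<C>. X \<subseteq> Y \<or> Y \<subseteq> X"
  shows "ideal_in A (\<Union>\<C>)"
  unfolding ideal_in_def
proof (intro conjI ballI)
  show "\<Union>\<C> \<subseteq> A" using ideals ideal_inD(1) by blast
  obtain I0 where "I0 \<in> \<C>" using ne by blast
  then show "0 \<in> \<Union>\<C>" using ideals ideal_inD(2) by blast
  show "x + y \<in> \<Union>\<C>" if xy: "x \<in> \<Union>\<C>" "y \<in> \<Union>\<C>" for x y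
  proof -
    obtain X Y where XY: "X \<in> \<C>" "Y \<in> \<C>" "x \<in> X" "y \<in> Y" using xy by blast
    then consider "X \<subseteq> Y" | "Y \<subseteq> X" using lin by blast
    then show ?thesis using XY ideals ideal_inD(3) by cases blast+
  qed
  show "- x \<in> \<Union>\<C>" if "x \<in> \<Union>\<C>" for x
    using that ideals ideal_inD(4) by blast
  show "r * x \<in> \<Union>\<C>" if "r \<in> A" "x \<in> \<Union>\<C>" for r x
    using that ideals ideal_inD(5) by blast
qed

lemma ex_maximal_ideal_in_superset:
  assumes A: "1 \<in> A" and J: "ideal_in A J" "J \<noteq> A"
  shows "\<exists>m. maximal_ideal_in A m \<and> J \<subseteq> m"
proof -
  define \<I> where "\<I> = {I. ideal_in A I \<and> J \<subseteq> I \<and> 1 \<notin> I}"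
  have J_mem: "J \<in> \<I>" unfolding \<I>_def using J ideal_in_eq_if_one_mem by blast
  have "\<forall>\<C>\<in>chains \<I>. \<exists>U\<in>\<I>. \<forall>X\<in>\<C>. X \<subseteq> U"
  proof
    fix \<C> assume \<C>: "\<C> \<in> chains \<I>"
    show "\<exists>U\<in>\<I>. \<forall>X\<in>\<C>. X \<subseteq> U"
    proof (cases "\<C> = {}")
      case False
      have sub: "\<C> \<subseteq> \<I>" and lin: "\<forall>X\<in>\<C>. \<forall>Y\<in>\<C>. X \<subseteq> Y \<or> Y \<subseteq> X"
        using \<C> unfolding chains_def chain_subset_def by blast+
      have "\<forall>I\<in>\<C>. ideal_in A I" using sub unfolding \<I>_def by blast
      then have "ideal_in A (\<Union>\<C>)" using ideal_in_Union_chain[OF False _ lin] by blast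
      moreover have "J \<subseteq> \<Union>\<C>" "1 \<notin> \<Union>\<C>" using False sub unfolding \<I>_def by blast+
      ultimately have "\<Union>\<C> \<in> \<I>" unfolding \<I>_def by blast
      then show ?thesis by blast
    qed (use J_mem in blast)
  qed
  then obtain m where m: "m \<in> \<I>" "\<forall>X\<in>\<I>. m \<subseteq> X \<longrightarrow> X = m" using Zorn_Lemma2 by blast
  have "maximal_ideal_in A m" unfolding maximal_ideal_in_def
  proof (intro conjI allI impI)
    show "ideal_in A m" "m \<noteq> A" using m(1) A unfolding \<I>_def by blast+
    fix K assume K: "ideal_in A K \<and> m \<subseteq> K"
    show "K = m \<or> K = A"
    proof (cases "1 \<in> K")
      case True then show ?thesis using ideal_in_eq_if_one_mem K by blast
    next
      case False then show ?thesis using K m unfolding \<I>_def by blast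
    qed
  qed
  then show ?thesis using m(1) unfolding \<I>_def by blast
qed

definition prime_chain_to :: "nat \<Rightarrow> 'a::comm_ring_1 set \<Rightarrow> bool" where
  "prime_chain_to n X \<longleftrightarrow>
     (\<exists>C. (\<forall>i\<le>n. prime_ideal (C i)) \<and> (\<forall>i<n. C i \<subset> C (Suc i)) \<and> C n = X)"

lemma prime_chain_to_0: "prime_ideal X \<Longrightarrow> prime_chain_to 0 X"
  unfolding prime_chain_to_def by (intro exI[of _ "\<lambda>_. X"]) auto

lemma prime_chain_to_prime: "prime_chain_to n X \<Longrightarrow> prime_ideal X"
  unfolding prime_chain_to_def by auto

lemma prime_chain_to_Suc:
  assumes "prime_chain_to n Y" "Y \<subset> X" "prime_ideal X"
  shows "prime_chain_to (Suc n) X"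
proof -
  obtain C where C: "\<forall>i\<le>n. prime_ideal (C i)" "\<forall>i<n. C i \<subset> C (Suc i)" "C n = Y"
    using assms(1) unfolding prime_chain_to_def by blast
  have "\<forall>i<Suc n. (C(Suc n := X)) i \<subset> (C(Suc n := X)) (Suc i)"
    using C(2,3) assms(2) less_Suc_eq by auto
  moreover have "\<forall>i\<le>Suc n. prime_ideal ((C(Suc n := X)) i)"
    using C(1) assms(3) le_Suc_eq by auto
  ultimately show ?thesis unfolding prime_chain_to_def by (intro exI[of _ "C(Suc n := X)"]) simp
qed

lemma prime_chain_to_mono:
  assumes "prime_chain_to n X" "m \<le> n"
  shows "prime_chain_to m X"
proof -
  obtain C where C: "\<forall>i\<le>n. prime_ideal (C i)" "\<forall>i<n. C i \<subset> C (Suc i)" "C n = X"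
    using assms(1) unfolding prime_chain_to_def by blast
  show ?thesis unfolding prime_chain_to_def
    by (intro exI[of _ "\<lambda>i. C (i + (n - m))"]) (use C assms(2) in auto)
qed

lemma krull_dim_eq_Sup_prime_chain_to:
  "krull_dim TYPE('a::comm_ring_1) = Sup {enat n | n. \<exists>X :: 'a set. prime_chain_to n X}"
  unfolding krull_dim_def prime_chain_to_def by metis

lemma prime_chain_to_le_krull_dim:
  assumes "prime_chain_to n (X :: 'a::comm_ring_1 set)"
  shows "enat n \<le> krull_dim TYPE('a)"
  unfolding krull_dim_eq_Sup_prime_chain_to using assms by (blast intro: Sup_upper)

lemma krull_dim_le:
  assumes "\<And>n X :: 'a::comm_ring_1 set. prime_chain_to n X \<Longrightarrow> n \<le> k"
  shows "krull_dim TYPE('a) \<le> enat k"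
  unfolding krull_dim_eq_Sup_prime_chain_to using assms by (auto intro!: Sup_least)

section \<open>Homogeneous components\<close>

locale graded =
  fixes G :: "nat \<Rightarrow> 'a::comm_ring_1 set"
  assumes graded: "graded_ring G"
begin

lemma G_zero: "0 \<in> G i"
  and G_add: "x \<in> G i \<Longrightarrow> y \<in> G i \<Longrightarrow> x + y \<in> G i"
  and G_uminus: "x \<in> G i \<Longrightarrow> - x \<in> G i"
  and G_mult: "x \<in> G i \<Longrightarrow> y \<in> G j \<Longrightarrow> x * y \<in> G (i + j)"
  and G_one: "1 \<in> G 0"
  and ex1_hom_decomp: "\<exists>!c. hom_decomp G x c"
  and G_nontrivial: "\<exists>i\<ge>1. G i \<noteq> {0}"
  using graded unfolding graded_ring_def by blast+

lemma subring_G0: "is_subring (G 0)"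
  unfolding is_subring_def using G_one G_uminus G_add G_mult[of _ 0 _ 0] by auto

lemma G_sum: "finite I \<Longrightarrow> \<forall>j\<in>I. f j \<in> G i \<Longrightarrow> sum f I \<in> G i"
  using sum_mem_add_closed[of "G i" I f] G_zero G_add by blast

definition hcomp :: "'a \<Rightarrow> nat \<Rightarrow> 'a" where
  "hcomp x = (THE c. hom_decomp G x c)"

lemma hom_decomp_hcomp: "hom_decomp G x (hcomp x)"
  unfolding hcomp_def using ex1_hom_decomp[of x] by (rule theI')

lemma hcomp_mem: "hcomp x i \<in> G i"
  using hom_decomp_hcomp[of x] unfolding hom_decomp_def by blast

lemma finite_hcomp_support: "finite {i. hcomp x i \<noteq> 0}"
  using hom_decomp_hcomp[of x] unfolding hom_decomp_def by blast

lemma hcomp_eventually_zero: "\<exists>N. \<forall>i\<ge>N. hcomp x i = 0"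
proof -
  obtain N where "{i. hcomp x i \<noteq> 0} \<subseteq> {..<N}"
    using finite_nat_bounded[OF finite_hcomp_support[of x]] by blast
  then show ?thesis by (intro exI[of _ N]) auto
qed

lemma hcomp_eventually_zero_both: "\<exists>N. (\<forall>i\<ge>N. hcomp x i = 0) \<and> (\<forall>i\<ge>N. hcomp y i = 0)"
proof -
  obtain N1 N2 where "\<forall>i\<ge>N1. hcomp x i = 0" "\<forall>i\<ge>N2. hcomp y i = 0"
    using hcomp_eventually_zero by metis
  then show ?thesis by (intro exI[of _ "max N1 N2"]) auto
qed

lemma sum_hcomp: "\<forall>i\<ge>N. hcomp x i = 0 \<Longrightarrow> x = (\<Sum>i<N. hcomp x i)"
  using hom_decomp_hcomp[of x] sum_support_eq_sum_lessThan unfolding hom_decomp_def by metis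

lemma hcomp_unique:
  fixes N :: nat
  assumes "\<forall>i. c i \<in> G i" "\<forall>i\<ge>N. c i = 0" "x = (\<Sum>i<N. c i)"
  shows "hcomp x = c"
proof -
  have "finite {i. c i \<noteq> 0}"
    using support_subset_lessThan[OF assms(2)] finite_subset finite_lessThan by blast
  then have "hom_decomp G x c"
    unfolding hom_decomp_def using assms sum_support_eq_sum_lessThan[OF assms(2)] by simp
  then show ?thesis using ex1_hom_decomp[of x] hom_decomp_hcomp[of x] by blast
qed

lemma hcomp_add: "hcomp (x + y) i = hcomp x i + hcomp y i"
proof -
  obtain N where N: "\<forall>i\<ge>N. hcomp x i = 0" "\<forall>i\<ge>N. hcomp y i = 0"
    using hcomp_eventually_zero_both by blast
  have "hcomp (x + y) = (\<lambda>i. hcomp x i + hcomp y i)"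
    by (rule hcomp_unique[where N=N])
      (use N sum_hcomp[OF N(1)] sum_hcomp[OF N(2)] in \<open>auto simp: G_add hcomp_mem sum.distrib\<close>)
  then show ?thesis by simp
qed

lemma hcomp_homogeneous: "a \<in> G k \<Longrightarrow> hcomp a = (\<lambda>i. if i = k then a else 0)"
  by (rule hcomp_unique[where N="Suc k"]) (auto simp: G_zero)

lemma hcomp_zero [simp]: "hcomp 0 i = 0"
  using hcomp_homogeneous[OF G_zero[of 0]] by simp

lemma hcomp_uminus: "hcomp (- x) i = - hcomp x i"
  using hcomp_add[of x "-x" i] by (metis add.right_inverse hcomp_zero neg_eq_iff_add_eq_0)

lemma hcomp_diff: "hcomp (x - y) i = hcomp x i - hcomp y i"
  using hcomp_add[of x "-y" i] hcomp_uminus[of y i] by simp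

lemma hcomp_one: "hcomp 1 i = (if i = 0 then 1 else 0)"
  using hcomp_homogeneous[OF G_one] by simp

lemma hcomp_mult: "hcomp (x * y) n = (\<Sum>i\<le>n. hcomp x i * hcomp y (n - i))"
proof -
  obtain N where N: "\<forall>i\<ge>N. hcomp x i = 0" "\<forall>i\<ge>N. hcomp y i = 0"
    using hcomp_eventually_zero_both by blast
  define c where "c = (\<lambda>n. \<Sum>i\<le>n. hcomp x i * hcomp y (n - i))"
  have c_mem: "\<forall>n. c n \<in> G n"
    unfolding c_def by (auto intro!: G_sum) (metis G_mult hcomp_mem le_add_diff_inverse)
  have c_zero: "\<forall>n\<ge>2*N. c n = 0"
  proof (intro allI impI)
    fix n :: nat assume "2*N \<le> n"
    then have "hcomp x i * hcomp y (n - i) = 0" for i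
      using N by (cases "i < N") auto
    then show "c n = 0" unfolding c_def by simp
  qed
  have "x * y = (\<Sum>i<N. hcomp x i) * (\<Sum>j<N. hcomp y j)"
    using sum_hcomp[OF N(1)] sum_hcomp[OF N(2)] by simp
  also have "\<dots> = (\<Sum>(i,j)\<in>{..<N}\<times>{..<N}. hcomp x i * hcomp y j)"
    by (simp add: sum_product sum.cartesian_product)
  also have "\<dots> = (\<Sum>(i,j)\<in>{(i,j). i + j < 2*N}. hcomp x i * hcomp y j)"
  proof (rule sum.mono_neutral_left)
    show "finite {(i, j). i + j < 2 * N}"
      by (rule finite_subset[of _ "{..<2*N} \<times> {..<2*N}"]) auto
    have "hcomp x i * hcomp y j = 0" if "N \<le> i \<or> N \<le> j" for i j using N that by auto
    then show "\<forall>p\<in>{(i, j). i + j < 2 * N} - {..<N} \<times> {..<N}.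
        (case p of (i, j) \<Rightarrow> hcomp x i * hcomp y j) = 0"
      by (auto simp: not_less) (meson not_less)+
  qed auto
  also have "\<dots> = (\<Sum>n<2*N. c n)"
    unfolding c_def by (rule sum.triangle_reindex)
  finally have "hcomp (x * y) = c" by (intro hcomp_unique[where N="2*N"] c_mem c_zero)
  then show ?thesis unfolding c_def by simp
qed

lemma hcomp_mult_homogeneous:
  assumes "a \<in> G k"
  shows "hcomp (a * y) n = (if k \<le> n then a * hcomp y (n - k) else 0)"
proof -
  have "hcomp (a * y) n = (\<Sum>i\<le>n. (if i = k then a else 0) * hcomp y (n - i))"
    using hcomp_mult[of a y n] hcomp_homogeneous[OF assms] by simp
  also have "\<dots> = (\<Sum>i\<in>{..n} \<inter> {k}. a * hcomp y (n - i))"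
    by (rule sum.mono_neutral_cong_right) auto
  also have "\<dots> = (if k \<le> n then a * hcomp y (n - k) else 0)"
    by (cases "k \<le> n") (auto simp: Int_absorb1)
  finally show ?thesis .
qed

lemma hcomp_mult_0: "hcomp (x * y) 0 = hcomp x 0 * hcomp y 0"
  using hcomp_mult[of x y 0] by simp

lemma ex_sum_hcomp: "\<exists>N. x = (\<Sum>i<N. hcomp x i)"
  using hcomp_eventually_zero[of x] sum_hcomp by blast

end

context graded
begin

text \<open>For an ideal \<open>P\<close>, \<open>hcore P\<close> is \<open>P\<^sup>*\<close>, the ideal generated by the homogeneous elements of \<open>P\<close>.\<close>
definition hcore :: "'a set \<Rightarrow> 'a set" where
  "hcore P = {x. \<forall>i. hcomp x i \<in> P}"

lemma hcore_subset: assumes "is_ideal P" shows "hcore P \<subseteq> P"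
proof
  fix x assume "x \<in> hcore P"
  obtain N where "x = (\<Sum>i<N. hcomp x i)" using ex_sum_hcomp by blast
  moreover have "(\<Sum>i<N. hcomp x i) \<in> P"
    using \<open>x \<in> hcore P\<close> by (intro ideal_sum_mem[OF assms]) (auto simp: hcore_def)
  ultimately show "x \<in> P" by simp
qed

lemma homogeneous_mem_hcore:
  assumes "a \<in> G k" "a \<in> P" "is_ideal P"
  shows "a \<in> hcore P"
  unfolding hcore_def using hcomp_homogeneous[OF assms(1)] assms(2) is_idealD(1)[OF assms(3)] by simp

lemma hcomp_mem_hcore: "x \<in> hcore P \<Longrightarrow> is_ideal P \<Longrightarrow> hcomp x i \<in> hcore P"
  using homogeneous_mem_hcore[OF hcomp_mem] unfolding hcore_def by blast

lemma ideal_hcore: assumes "is_ideal P" shows "is_ideal (hcore P)"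
  unfolding ideal_in_def
proof (intro conjI ballI)
  show "0 \<in> hcore P" unfolding hcore_def using is_idealD(1)[OF assms] by simp
  show "x + y \<in> hcore P" if "x \<in> hcore P" "y \<in> hcore P" for x y
    using that is_idealD(2)[OF assms] unfolding hcore_def by (simp add: hcomp_add)
  show "- x \<in> hcore P" if "x \<in> hcore P" for x
    using that is_idealD(3)[OF assms] unfolding hcore_def by (simp add: hcomp_uminus)
  show "r * x \<in> hcore P" if "x \<in> hcore P" for r x
    using that unfolding hcore_def
    by (auto simp: hcomp_mult intro!: ideal_sum_mem[OF assms] is_idealD(4)[OF assms])
qed auto

lemma hcore_mono: "P \<subseteq> Q \<Longrightarrow> hcore P \<subseteq> hcore Q"
  unfolding hcore_def by blast

lemma subset_hcoreI: "\<forall>x\<in>I. \<forall>i. hcomp x i \<in> I \<Longrightarrow> I \<subseteq> P \<Longrightarrow> I \<subseteq> hcore P"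
  unfolding hcore_def by blast

end

context graded
begin

definition outside_degs :: "'a set \<Rightarrow> 'a \<Rightarrow> nat set" where
  "outside_degs P x = {i. hcomp x i \<notin> P}"

definition top_deg :: "'a set \<Rightarrow> 'a \<Rightarrow> nat" where
  "top_deg P x = Max (outside_degs P x)"

definition bot_deg :: "'a set \<Rightarrow> 'a \<Rightarrow> nat" where
  "bot_deg P x = Min (outside_degs P x)"

text \<open>\<open>spread P x\<close> measures how far \<open>x\<close> is from being homogeneous modulo \<open>P\<close>; it is the
  measure of the descent arguments below.\<close>
definition spread :: "'a set \<Rightarrow> 'a \<Rightarrow> nat" where
  "spread P x = top_deg P x - bot_deg P x"

context
  fixes P :: "'a set"
  assumes P: "prime_ideal P"
begin

lemma ideal_P: "is_ideal P" using prime_idealD[OF P] by blast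

lemma finite_outside_degs: "finite (outside_degs P x)"
proof -
  have "outside_degs P x \<subseteq> {i. hcomp x i \<noteq> 0}"
    unfolding outside_degs_def using is_idealD(1)[OF ideal_P] by auto
  then show ?thesis using finite_hcomp_support finite_subset by blast
qed

lemma outside_degs_nonempty: "x \<notin> hcore P \<Longrightarrow> outside_degs P x \<noteq> {}"
  unfolding outside_degs_def hcore_def by auto

lemma outside_degs_cong: assumes "u - v \<in> hcore P" shows "outside_degs P u = outside_degs P v"
proof -
  have diff: "hcomp u i - hcomp v i \<in> P" for i
    using assms unfolding hcore_def by (auto simp: hcomp_diff)
  have "hcomp u i \<in> P \<longleftrightarrow> hcomp v i \<in> P" for i
    using ideal_diff_mem[OF ideal_P _ diff[of i]] is_idealD(2)[OF ideal_P _ diff[of i]] by force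
  then show ?thesis unfolding outside_degs_def by auto
qed

lemma spread_cong: "u - v \<in> hcore P \<Longrightarrow> spread P u = spread P v"
  unfolding spread_def top_deg_def bot_deg_def using outside_degs_cong by simp

lemma top_deg_mem: "x \<notin> hcore P \<Longrightarrow> top_deg P x \<in> outside_degs P x"
  unfolding top_deg_def using finite_outside_degs outside_degs_nonempty Max_in by blast

lemma bot_deg_mem: "x \<notin> hcore P \<Longrightarrow> bot_deg P x \<in> outside_degs P x"
  unfolding bot_deg_def using finite_outside_degs outside_degs_nonempty Min_in by blast

lemma le_top_deg: "n \<in> outside_degs P x \<Longrightarrow> n \<le> top_deg P x"
  unfolding top_deg_def using finite_outside_degs Max_ge by blast

lemma bot_deg_le: "n \<in> outside_degs P x \<Longrightarrow> bot_deg P x \<le> n"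
  unfolding bot_deg_def using finite_outside_degs Min_le by blast

lemma hcomp_mem_above_top_deg: "top_deg P x < n \<Longrightarrow> hcomp x n \<in> P"
  using le_top_deg[of n x] unfolding outside_degs_def by fastforce

lemma hcomp_mem_below_bot_deg: "n < bot_deg P x \<Longrightarrow> hcomp x n \<in> P"
  using bot_deg_le[of n x] unfolding outside_degs_def by fastforce

lemma bot_deg_le_top_deg: "x \<notin> hcore P \<Longrightarrow> bot_deg P x \<le> top_deg P x"
  using bot_deg_le top_deg_mem by blast

lemma top_deg_eqI:
  "n \<in> outside_degs P x \<Longrightarrow> (\<And>m. m \<in> outside_degs P x \<Longrightarrow> m \<le> n) \<Longrightarrow> top_deg P x = n"
  unfolding top_deg_def using finite_outside_degs by (intro Max_eqI) auto

lemma bot_deg_eqI: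
  "n \<in> outside_degs P x \<Longrightarrow> (\<And>m. m \<in> outside_degs P x \<Longrightarrow> n \<le> m) \<Longrightarrow> bot_deg P x = n"
  unfolding bot_deg_def using finite_outside_degs by (intro Min_eqI) auto

lemma outside_degs_mult_homogeneous:
  assumes "a \<in> G k" "a \<notin> P"
  shows "n \<in> outside_degs P (a * y) \<longleftrightarrow> k \<le> n \<and> n - k \<in> outside_degs P y"
  unfolding outside_degs_def
  using hcomp_mult_homogeneous[OF assms(1), of y n] prime_ideal_mult_mem_iff[OF P] assms(2)
    is_idealD(1)[OF ideal_P] by auto

lemma spread_mult_homogeneous:
  assumes "a \<in> G k" "a \<notin> P" "y \<notin> hcore P"
  shows "spread P (a * y) = spread P y"
proof -
  note outside = outside_degs_mult_homogeneous[OF assms(1,2)]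
  have "top_deg P (a * y) = top_deg P y + k"
    by (rule top_deg_eqI) (use outside top_deg_mem[OF assms(3)] le_top_deg in force)+
  moreover have "bot_deg P (a * y) = bot_deg P y + k"
    by (rule bot_deg_eqI) (use outside bot_deg_mem[OF assms(3)] bot_deg_le in force)+
  ultimately show ?thesis unfolding spread_def by simp
qed

lemma top_deg_mult:
  assumes "g \<notin> hcore P" "x \<notin> hcore P"
  shows "top_deg P (g * x) = top_deg P g + top_deg P x"
proof (rule top_deg_eqI)
  let ?tg = "top_deg P g" and ?tx = "top_deg P x"
  show "?tg + ?tx \<in> outside_degs P (g * x)"
    unfolding outside_degs_def mem_Collect_eq hcomp_mult
  proof (rule ideal_sum_not_mem[OF ideal_P, where k="?tg"])
    show "hcomp g ?tg * hcomp x (?tg + ?tx - ?tg) \<notin> P"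
      using top_deg_mem[OF assms(1)] top_deg_mem[OF assms(2)] prime_ideal_mult_mem_iff[OF P]
      unfolding outside_degs_def by auto
    show "\<forall>j\<in>{..?tg + ?tx} - {?tg}. hcomp g j * hcomp x (?tg + ?tx - j) \<in> P"
    proof
      fix j assume "j \<in> {..?tg + ?tx} - {?tg}"
      then have "?tg < j \<or> ?tx < ?tg + ?tx - j" by auto
      then show "hcomp g j * hcomp x (?tg + ?tx - j) \<in> P"
        using hcomp_mem_above_top_deg prime_ideal_mult_mem_iff[OF P] by blast
    qed
  qed auto
  show "m \<le> ?tg + ?tx" if "m \<in> outside_degs P (g * x)" for m
  proof (rule ccontr)
    assume m: "\<not> m \<le> ?tg + ?tx"
    have "\<forall>j\<in>{..m}. hcomp g j * hcomp x (m - j) \<in> P"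
    proof
      fix j assume "j \<in> {..m}"
      then have "?tg < j \<or> ?tx < m - j" using m by auto
      then show "hcomp g j * hcomp x (m - j) \<in> P"
        using hcomp_mem_above_top_deg prime_ideal_mult_mem_iff[OF P] by blast
    qed
    then have "hcomp (g * x) m \<in> P" unfolding hcomp_mult by (intro ideal_sum_mem[OF ideal_P]) auto
    then show False using that unfolding outside_degs_def by simp
  qed
qed

lemma bot_deg_add_mem_outside_degs_mult:
  assumes "g \<notin> hcore P" "x \<notin> hcore P"
  shows "bot_deg P g + bot_deg P x \<in> outside_degs P (g * x)"
  unfolding outside_degs_def mem_Collect_eq hcomp_mult
proof (rule ideal_sum_not_mem[OF ideal_P, where k="bot_deg P g"])
  let ?bg = "bot_deg P g" and ?bx = "bot_deg P x"
  show "hcomp g ?bg * hcomp x (?bg + ?bx - ?bg) \<notin> P"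
    using bot_deg_mem[OF assms(1)] bot_deg_mem[OF assms(2)] prime_ideal_mult_mem_iff[OF P]
    unfolding outside_degs_def by auto
  show "\<forall>j\<in>{..?bg + ?bx} - {?bg}. hcomp g j * hcomp x (?bg + ?bx - j) \<in> P"
  proof
    fix j assume "j \<in> {..?bg + ?bx} - {?bg}"
    then have "j < ?bg \<or> ?bg + ?bx - j < ?bx" by auto
    then show "hcomp g j * hcomp x (?bg + ?bx - j) \<in> P"
      using hcomp_mem_below_bot_deg prime_ideal_mult_mem_iff[OF P] by blast
  qed
qed auto

lemma bot_deg_mult:
  assumes "g \<notin> hcore P" "x \<notin> hcore P"
  shows "bot_deg P (g * x) = bot_deg P g + bot_deg P x"
proof (rule bot_deg_eqI)
  let ?bg = "bot_deg P g" and ?bx = "bot_deg P x"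
  show "?bg + ?bx \<in> outside_degs P (g * x)" using bot_deg_add_mem_outside_degs_mult[OF assms] .
  show "?bg + ?bx \<le> m" if "m \<in> outside_degs P (g * x)" for m
  proof (rule ccontr)
    assume m: "\<not> ?bg + ?bx \<le> m"
    have "\<forall>j\<in>{..m}. hcomp g j * hcomp x (m - j) \<in> P"
    proof
      fix j assume "j \<in> {..m}"
      then have "j < ?bg \<or> m - j < ?bx" using m by auto
      then show "hcomp g j * hcomp x (m - j) \<in> P"
        using hcomp_mem_below_bot_deg prime_ideal_mult_mem_iff[OF P] by blast
    qed
    then have "hcomp (g * x) m \<in> P" unfolding hcomp_mult by (intro ideal_sum_mem[OF ideal_P]) auto
    then show False using that unfolding outside_degs_def by simp
  qed
qed

lemma mult_not_mem_hcore: "g \<notin> hcore P \<Longrightarrow> x \<notin> hcore P \<Longrightarrow> g * x \<notin> hcore P"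
  using bot_deg_add_mem_outside_degs_mult unfolding outside_degs_def hcore_def by blast

lemma prime_hcore: "prime_ideal (hcore P)"
  using ideal_hcore[OF ideal_P] hcore_subset[OF ideal_P] prime_idealD(2)[OF P] mult_not_mem_hcore
  by (intro prime_idealI) blast+

lemma spread_mult:
  "g \<notin> hcore P \<Longrightarrow> x \<notin> hcore P \<Longrightarrow> spread P (g * x) = spread P g + spread P x"
  unfolding spread_def using top_deg_mult bot_deg_mult bot_deg_le_top_deg by simp

lemma hcore_subset_P: "hcore P \<subseteq> P"
  using hcore_subset[OF ideal_P] .

text \<open>An element of \<open>P\<close> that is congruent modulo \<open>P\<^sup>*\<close> to a single component lies in \<open>P\<^sup>*\<close>.\<close>
lemma spread_pos: assumes "x \<in> P" "x \<notin> hcore P" shows "0 < spread P x"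
proof (rule ccontr)
  assume "\<not> 0 < spread P x"
  then have "top_deg P x = bot_deg P x" using bot_deg_le_top_deg[OF assms(2)] unfolding spread_def by simp
  then have single: "outside_degs P x = {top_deg P x}"
    using le_top_deg bot_deg_le top_deg_mem[OF assms(2)] by fastforce
  define k where "k = top_deg P x"
  have "x - hcomp x k \<in> hcore P"
    unfolding hcore_def
    using single hcomp_homogeneous[OF hcomp_mem[of x k]] is_idealD(1)[OF ideal_P]
    by (auto simp: hcomp_diff outside_degs_def k_def)
  then have "hcomp x k \<in> P" using hcore_subset_P ideal_diff_mem[OF ideal_P assms(1)] by force
  then show False using single unfolding outside_degs_def k_def by auto
qed

section \<open>No prime ideal lies strictly between \<open>P\<^sup>*\<close> and \<open>P\<close>\<close>

lemma spread_cancel_top_less: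
  assumes x: "x \<notin> hcore P" and y: "y \<notin> hcore P"
    and z: "z = hcomp x (top_deg P x) * y - hcomp y (top_deg P y) * x" "z \<notin> hcore P"
  shows "spread P z < max (spread P x) (spread P y)"
proof -
  let ?tx = "top_deg P x" and ?bx = "bot_deg P x" and ?ty = "top_deg P y" and ?by = "bot_deg P y"
  define a where "a = hcomp x ?tx"
  define b where "b = hcomp y ?ty"
  have aG: "a \<in> G ?tx" and bG: "b \<in> G ?ty" unfolding a_def b_def by (rule hcomp_mem)+
  have hcomp_z: "hcomp z n = hcomp (a * y) n - hcomp (b * x) n" for n
    unfolding z(1) a_def b_def by (rule hcomp_diff)
  have "hcomp z n \<in> P" if n: "\<not> (min (?by + ?tx) (?bx + ?ty) \<le> n \<and> n < ?tx + ?ty)" for n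
  proof (cases "n = ?tx + ?ty")
    case True
    then have "hcomp z n = a * b - b * a"
      using hcomp_z hcomp_mult_homogeneous[OF aG] hcomp_mult_homogeneous[OF bG]
      unfolding a_def b_def by simp
    then show ?thesis using is_idealD(1)[OF ideal_P] by simp
  next
    case False
    have "hcomp (a * y) n \<in> P"
    proof (cases "?tx \<le> n")
      case True
      then have "n - ?tx < ?by \<or> ?ty < n - ?tx" using n False by auto
      then have "hcomp y (n - ?tx) \<in> P" using hcomp_mem_below_bot_deg hcomp_mem_above_top_deg by blast
      then show ?thesis using True hcomp_mult_homogeneous[OF aG] is_idealD(4)[OF ideal_P] by simp
    qed (use hcomp_mult_homogeneous[OF aG] is_idealD(1)[OF ideal_P] in simp)
    moreover have "hcomp (b * x) n \<in> P"
    proof (cases "?ty \<le> n")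
      case True
      then have "n - ?ty < ?bx \<or> ?tx < n - ?ty" using n False by auto
      then have "hcomp x (n - ?ty) \<in> P" using hcomp_mem_below_bot_deg hcomp_mem_above_top_deg by blast
      then show ?thesis using True hcomp_mult_homogeneous[OF bG] is_idealD(4)[OF ideal_P] by simp
    qed (use hcomp_mult_homogeneous[OF bG] is_idealD(1)[OF ideal_P] in simp)
    ultimately show ?thesis using hcomp_z ideal_diff_mem[OF ideal_P] by simp
  qed
  then have "min (?by + ?tx) (?bx + ?ty) \<le> n \<and> n < ?tx + ?ty" if "n \<in> outside_degs P z" for n
    using that unfolding outside_degs_def by blast
  then have "min (?by + ?tx) (?bx + ?ty) \<le> bot_deg P z" "top_deg P z < ?tx + ?ty"
    using bot_deg_mem[OF z(2)] top_deg_mem[OF z(2)] by auto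
  then show ?thesis
    using bot_deg_le_top_deg[OF x] bot_deg_le_top_deg[OF y] bot_deg_le_top_deg[OF z(2)]
    unfolding spread_def by linarith
qed

context
  fixes x :: 'a
  assumes x: "x \<in> P" "x \<notin> hcore P"
    and spread_minimal: "\<And>z. z \<in> P \<Longrightarrow> z \<notin> hcore P \<Longrightarrow> spread P x \<le> spread P z"
begin

text \<open>Descent on the spread of \<open>y\<close>: cancelling the top components of \<open>x\<close> and \<open>y\<close> against each other
  lowers it, and the minimality of \<open>x\<close> bounds the result.\<close>
lemma ex_homogeneous_multiple_congruent:
  "y \<in> P \<Longrightarrow> \<exists>h k g. h \<in> G k \<and> h \<notin> P \<and> h * y - g * x \<in> hcore P"
proof (induction "spread P y" arbitrary: y rule: less_induct)
  case less
  have trivial: "\<exists>h k g. h \<in> G k \<and> h \<notin> P \<and> h * w - g * x \<in> hcore P" if "w \<in> hcore P" for w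
    using that G_one prime_idealD(2)[OF P] by (intro exI[of _ 1] exI[of _ 0] exI[of _ 0]) auto
  show ?case
  proof (cases "y \<in> hcore P")
    case y: False
    define a where "a = hcomp x (top_deg P x)"
    define b where "b = hcomp y (top_deg P y)"
    define z where "z = a * y - b * x"
    have aG: "a \<in> G (top_deg P x)" unfolding a_def by (rule hcomp_mem)
    have a: "a \<notin> P" using top_deg_mem[OF x(2)] unfolding a_def outside_degs_def by simp
    have zP: "z \<in> P" unfolding z_def using less.prems x(1)
      by (intro ideal_diff_mem[OF ideal_P] is_idealD(4)[OF ideal_P])
    have "\<exists>h k g. h \<in> G k \<and> h \<notin> P \<and> h * z - g * x \<in> hcore P"
    proof (cases "z \<in> hcore P")
      case False
      then have "spread P z < max (spread P x) (spread P y)"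
        using spread_cancel_top_less[OF x(2) y] unfolding z_def a_def b_def by blast
      also have "\<dots> = spread P y" using spread_minimal[OF less.prems y] by simp
      finally show ?thesis using less.hyps zP by blast
    qed (rule trivial)
    then obtain h k g where hkg: "h \<in> G k" "h \<notin> P" "h * z - g * x \<in> hcore P" by blast
    have "(h * a) * y - (h * b + g) * x = h * z - g * x" unfolding z_def by (simp add: algebra_simps)
    moreover have "h * a \<in> G (k + top_deg P x)" using G_mult[OF hkg(1) aG] .
    moreover have "h * a \<notin> P" using prime_idealD(3)[OF P, of h a] hkg(2) a by blast
    ultimately show ?thesis using hkg(3) by metis
  qed (rule trivial)
qed

lemma mem_prime_between_if_minimal_spread:
  assumes Q: "prime_ideal Q" and QP: "Q \<subseteq> P" and hcore_Q: "hcore P \<subseteq> Q"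
  shows "y \<in> Q \<Longrightarrow> y \<notin> hcore P \<Longrightarrow> x \<in> Q"
proof (induction "spread P y" arbitrary: y rule: less_induct)
  case less
  have idQ: "is_ideal Q" using prime_idealD[OF Q] by blast
  note ideal_hcore_P = ideal_hcore[OF ideal_P]
  obtain h k g where hkg: "h \<in> G k" "h \<notin> P" "h * y - g * x \<in> hcore P"
    using ex_homogeneous_multiple_congruent less.prems(1) QP by blast
  have "h * y - g * x \<in> Q" using hkg(3) hcore_Q by blast
  moreover have "g * x = h * y - (h * y - g * x)" by simp
  ultimately have gx: "g * x \<in> Q" using ideal_diff_mem[OF idQ is_idealD(4)[OF idQ less.prems(1)]] by metis
  show "x \<in> Q"
  proof (rule ccontr)
    assume xQ: "x \<notin> Q"
    then have gQ: "g \<in> Q" using prime_idealD(3)[OF Q gx] by blast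
    have g: "g \<notin> hcore P"
    proof
      assume "g \<in> hcore P"
      then have "(h * y - g * x) + g * x \<in> hcore P"
        using is_idealD(2)[OF ideal_hcore_P hkg(3)] ideal_mult_right_mem[OF ideal_hcore_P] by blast
      then have "h \<in> hcore P \<or> y \<in> hcore P" using prime_idealD(3)[OF prime_hcore] by simp
      then show False using hkg(2) hcore_subset_P less.prems(2) by blast
    qed
    have "g * x - h * y \<in> hcore P"
      using is_idealD(3)[OF ideal_hcore_P hkg(3)] by (simp add: minus_diff_eq)
    then have "spread P g + spread P x = spread P y"
      using spread_cong spread_mult[OF g x(2)] spread_mult_homogeneous[OF hkg(1,2) less.prems(2)] by metis
    then have "spread P g < spread P y" using spread_pos[OF x] by simp
    then show False using less.hyps gQ g xQ by blast
  qed
qed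

end

theorem no_prime_between_hcore:
  assumes Q: "prime_ideal Q" and hcore_Q: "hcore P \<subset> Q" and QP: "Q \<subset> P"
  shows False
proof -
  have idQ: "is_ideal Q" using prime_idealD[OF Q] by blast
  have "\<exists>x. x \<in> P \<and> x \<notin> hcore P" using hcore_Q QP by blast
  then obtain x where x: "x \<in> P" "x \<notin> hcore P"
    and minimal: "\<And>z. z \<in> P \<and> z \<notin> hcore P \<Longrightarrow> spread P x \<le> spread P z"
    using ex_has_least_nat[of "\<lambda>x. x \<in> P \<and> x \<notin> hcore P" _ "spread P"] by blast
  then have minimal': "\<And>z. z \<in> P \<Longrightarrow> z \<notin> hcore P \<Longrightarrow> spread P x \<le> spread P z" by blast
  obtain y where "y \<in> Q" "y \<notin> hcore P" using hcore_Q by blast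
  then have xQ: "x \<in> Q"
    using mem_prime_between_if_minimal_spread[OF x minimal' Q] hcore_Q QP by blast
  have "P \<subseteq> Q"
  proof
    fix y assume "y \<in> P"
    then obtain h k g where hkg: "h \<in> G k" "h \<notin> P" "h * y - g * x \<in> hcore P"
      using ex_homogeneous_multiple_congruent[OF x minimal'] by blast
    have "h * y - g * x \<in> Q" using hkg(3) hcore_Q by blast
    moreover have "h * y = (h * y - g * x) + g * x" by simp
    ultimately have "h * y \<in> Q" using is_idealD(2)[OF idQ _ is_idealD(4)[OF idQ xQ]] by metis
    then show "y \<in> Q" using prime_idealD(3)[OF Q] hkg(2) QP by blast
  qed
  then show False using QP by blast
qed

end

lemma prime_chain_to_hcore: "prime_chain_to n P \<Longrightarrow> prime_chain_to (n - 1) (hcore P)"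
proof (induction n arbitrary: P)
  case 0
  then show ?case using prime_chain_to_0[OF prime_hcore[OF prime_chain_to_prime]] by simp
next
  case (Suc n)
  obtain C where C: "\<forall>i\<le>Suc n. prime_ideal (C i)" "\<forall>i<Suc n. C i \<subset> C (Suc i)" "C (Suc n) = P"
    using Suc.prems unfolding prime_chain_to_def by blast
  define Q where "Q = C n"
  have chain_Q: "prime_chain_to n Q" unfolding prime_chain_to_def Q_def by (intro exI[of _ C]) (use C in auto)
  have QP: "Q \<subset> P" unfolding Q_def using C by auto
  have P: "prime_ideal P" using prime_chain_to_prime[OF Suc.prems] .
  have Q: "prime_ideal Q" using prime_chain_to_prime[OF chain_Q] .
  have idQ: "is_ideal Q" using prime_idealD Q by blast
  have hcore_P: "prime_ideal (hcore P)" using prime_hcore[OF P] .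
  show ?case
  proof (cases "hcore Q = Q")
    case True
    have "Q \<subseteq> hcore P"
      by (rule subset_hcoreI) (use True hcomp_mem_hcore[OF _ idQ] QP in auto)
    then consider "Q = hcore P" | "Q \<subset> hcore P" by blast
    then show ?thesis
    proof cases
      case 2
      then show ?thesis using prime_chain_to_Suc[OF chain_Q _ hcore_P] prime_chain_to_mono by fastforce
    qed (use chain_Q in simp)
  next
    case False
    have "hcore Q \<subseteq> hcore P" using hcore_mono QP by blast
    moreover have "hcore Q \<noteq> hcore P"
    proof
      assume "hcore Q = hcore P"
      then have "hcore P \<subset> Q" using hcore_subset[OF idQ] False by blast
      then show False using no_prime_between_hcore[OF P Q _ QP] by blast
    qed
    ultimately have "prime_chain_to (Suc (n - 1)) (hcore P)"
      using prime_chain_to_Suc[OF Suc.IH[OF chain_Q] _ hcore_P] by blast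
    then show ?thesis using prime_chain_to_mono[of "Suc (n - 1)" "hcore P" n] by simp
  qed
qed

end

section \<open>Extending ideals of \<open>R\<^sub>0\<close> by the irrelevant ideal\<close>

context graded
begin

text \<open>\<open>irrel_ext I\<close> is \<open>I + R\<^sub>+\<close> for an ideal \<open>I\<close> of \<open>R\<^sub>0\<close>.\<close>
definition irrel_ext :: "'a set \<Rightarrow> 'a set" where
  "irrel_ext I = {x. hcomp x 0 \<in> I}"

lemma ideal_irrel_ext: assumes "ideal_in (G 0) I" shows "is_ideal (irrel_ext I)"
  using ideal_inD[OF assms] unfolding ideal_in_def irrel_ext_def
  by (auto simp: hcomp_add hcomp_uminus hcomp_mult_0 hcomp_mem)

lemma prime_irrel_ext:
  assumes I: "ideal_in (G 0) I" "1 \<notin> I"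
    and prime: "\<And>a b. a \<in> G 0 \<Longrightarrow> b \<in> G 0 \<Longrightarrow> a * b \<in> I \<Longrightarrow> a \<in> I \<or> b \<in> I"
  shows "prime_ideal (irrel_ext I)"
proof (rule prime_idealI)
  show "is_ideal (irrel_ext I)" using ideal_irrel_ext[OF I(1)] .
  show "1 \<notin> irrel_ext I" unfolding irrel_ext_def using I(2) by (simp add: hcomp_one)
  show "a * b \<in> irrel_ext I \<Longrightarrow> a \<in> irrel_ext I \<or> b \<in> irrel_ext I" for a b
    unfolding irrel_ext_def using prime[OF hcomp_mem hcomp_mem] by (simp add: hcomp_mult_0)
qed

lemma ideal_in_G0_Int: assumes "is_ideal P" shows "ideal_in (G 0) (P \<inter> G 0)"
  unfolding ideal_in_def using is_idealD[OF assms] G_zero G_add G_uminus G_mult[of _ 0 _ 0] by auto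

lemma prime_irrel_ext_Int:
  assumes "prime_ideal P"
  shows "prime_ideal (irrel_ext (P \<inter> G 0))"
  using ideal_in_G0_Int prime_idealD[OF assms] by (intro prime_irrel_ext) auto

lemma prime_irrel_ext_maximal:
  assumes m: "maximal_ideal_in (G 0) m"
  shows "prime_ideal (irrel_ext m)"
proof (rule prime_irrel_ext)
  show im: "ideal_in (G 0) m" using m unfolding maximal_ideal_in_def by blast
  show "1 \<notin> m" using m ideal_in_eq_if_one_mem[OF im] unfolding maximal_ideal_in_def by blast
qed (use maximal_ideal_in_prime[OF subring_G0 m] in blast)

lemma irrel_ext_psubset:
  assumes J: "ideal_in (G 0) J" and IJ: "I \<subseteq> J" "I \<noteq> J"
  shows "irrel_ext I \<subset> irrel_ext J"
proof -
  obtain z where z: "z \<in> J" "z \<notin> I" using IJ by blast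
  have "hcomp z 0 = z" using hcomp_homogeneous[of z 0] ideal_inD(1)[OF J] z(1) by auto
  then have "z \<in> irrel_ext J - irrel_ext I" unfolding irrel_ext_def using z by simp
  moreover have "irrel_ext I \<subseteq> irrel_ext J" unfolding irrel_ext_def using IJ(1) by blast
  ultimately show ?thesis by blast
qed

lemma hcore_subset_irrel_ext: "hcore P \<subseteq> irrel_ext (P \<inter> G 0)"
  unfolding hcore_def irrel_ext_def using hcomp_mem by blast

lemma hcore_psubset_irrel_ext:
  assumes P: "is_ideal P" "hcore P \<noteq> P"
  shows "hcore P \<subset> irrel_ext (P \<inter> G 0)"
proof -
  have "P \<subseteq> irrel_ext (P \<inter> G 0)" if eq: "hcore P = irrel_ext (P \<inter> G 0)"
  proof
    fix x assume x: "x \<in> P"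
    have "x - hcomp x 0 \<in> irrel_ext (P \<inter> G 0)"
      unfolding irrel_ext_def using is_idealD(1)[OF P(1)] G_zero hcomp_homogeneous[OF hcomp_mem[of x 0]]
      by (simp add: hcomp_diff)
    then have "x - hcomp x 0 \<in> P" using eq hcore_subset[OF P(1)] by blast
    then have "hcomp x 0 \<in> P" using ideal_diff_mem[OF P(1) x] by force
    then show "x \<in> irrel_ext (P \<inter> G 0)" unfolding irrel_ext_def using hcomp_mem by blast
  qed
  then show ?thesis using hcore_subset_irrel_ext hcore_subset[OF P(1)] P(2) by blast
qed

text \<open>A chain of primes ending at \<open>P\<close> is prolonged through
  \<open>(P \<inter> R\<^sub>0) + R\<^sub>+ \<subset> m + R\<^sub>+\<close>; when \<open>P\<close> is not homogeneous, it is first replaced by a chain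
  of one step less ending at \<open>P\<^sup>*\<close>.\<close>
lemma prime_chain_to_Suc_if_not_maximal:
  assumes chain: "prime_chain_to n P" and not_max: "\<not> maximal_ideal_in (G 0) (P \<inter> G 0)"
  shows "\<exists>X :: 'a set. prime_chain_to (Suc n) X"
proof -
  have P: "prime_ideal P" using prime_chain_to_prime[OF chain] .
  have idP: "is_ideal P" using prime_idealD(1)[OF P] .
  have ip: "ideal_in (G 0) (P \<inter> G 0)" using ideal_in_G0_Int[OF idP] .
  have "P \<inter> G 0 \<noteq> G 0" using G_one prime_idealD(2)[OF P] by blast
  then obtain J where J: "ideal_in (G 0) J" "P \<inter> G 0 \<subseteq> J" "J \<noteq> P \<inter> G 0" "J \<noteq> G 0"
    using not_max ip unfolding maximal_ideal_in_def by blast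
  obtain m where m: "maximal_ideal_in (G 0) m" "J \<subseteq> m"
    using ex_maximal_ideal_in_superset[OF G_one J(1,4)] by blast
  have im: "ideal_in (G 0) m" using m(1) unfolding maximal_ideal_in_def by blast
  have Em: "prime_ideal (irrel_ext m)" using prime_irrel_ext_maximal[OF m(1)] .
  have pm: "irrel_ext (P \<inter> G 0) \<subset> irrel_ext m"
    using irrel_ext_psubset[OF im, of "P \<inter> G 0"] J(2,3) m(2) by blast
  show ?thesis
  proof (cases "hcore P = P")
    case True
    then have "P \<subset> irrel_ext m" using hcore_subset_irrel_ext[of P] pm by blast
    then show ?thesis using prime_chain_to_Suc[OF chain _ Em] by blast
  next
    case False
    have "prime_chain_to (Suc (n - 1)) (irrel_ext (P \<inter> G 0))"
      using prime_chain_to_Suc[OF prime_chain_to_hcore[OF chain] hcore_psubset_irrel_ext[OF idP False]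
          prime_irrel_ext_Int[OF P]] .
    then have "prime_chain_to (Suc (Suc (n - 1))) (irrel_ext m)" using prime_chain_to_Suc[OF _ pm Em] by blast
    then have "prime_chain_to (Suc n) (irrel_ext m)" using prime_chain_to_mono by fastforce
    then show ?thesis by blast
  qed
qed

lemma prime_chain_to_1_irrel_ext_zero:
  assumes "prime_ideal ({0} :: 'a set)"
  shows "prime_chain_to 1 (irrel_ext {0})"
proof -
  have i0: "ideal_in (G 0) {0}" unfolding ideal_in_def using G_zero by auto
  obtain i y where "i \<ge> 1" "y \<in> G i" "y \<noteq> 0" using G_nontrivial G_zero by blast
  then have "y \<in> irrel_ext {0}" unfolding irrel_ext_def using hcomp_homogeneous[of y i] by simp
  then have "{0} \<subset> irrel_ext {0}" using \<open>y \<noteq> 0\<close> unfolding irrel_ext_def by auto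
  moreover have "prime_ideal (irrel_ext {0})"
    using prime_idealD(2,3)[OF assms] by (intro prime_irrel_ext[OF i0]) auto
  ultimately show ?thesis using prime_chain_to_Suc[OF prime_chain_to_0[OF assms]] by simp
qed

lemma maximal_ideal_in_G0_Int_if_homogeneous:
  assumes M: "maximal_ideal M" and hom: "\<forall>x\<in>M. \<forall>i. hcomp x i \<in> M"
  shows "maximal_ideal_in (G 0) (M \<inter> G 0)"
proof -
  have idM: "is_ideal M" and M_proper: "M \<noteq> UNIV" using M unfolding maximal_ideal_in_def by blast+
  have "1 \<notin> M" using M_proper is_idealD(4)[OF idM, of 1] by auto
  then have "M \<inter> G 0 \<noteq> G 0" using G_one by blast
  moreover have "J = M \<inter> G 0 \<or> J = G 0" if J: "ideal_in (G 0) J" "M \<inter> G 0 \<subseteq> J" for J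
  proof (rule ccontr)
    assume J_new: "\<not> (J = M \<inter> G 0 \<or> J = G 0)"
    have "1 \<notin> J" using ideal_in_eq_if_one_mem[OF J(1)] J_new by blast
    then have "irrel_ext J \<noteq> UNIV" using hcomp_one[of 0] unfolding irrel_ext_def by (metis UNIV_I mem_Collect_eq)
    moreover have "M \<subset> irrel_ext J"
      using subset_hcoreI[OF hom] hcore_subset_irrel_ext[of M] irrel_ext_psubset[OF J(1) J(2)] J_new by blast
    ultimately show False using M ideal_irrel_ext[OF J(1)] unfolding maximal_ideal_in_def by blast
  qed
  ultimately show ?thesis using ideal_in_G0_Int[OF idM] unfolding maximal_ideal_in_def by blast
qed

end

lemma prime_ideal_zero: "prime_ideal ({0} :: 'a::idom set)"
  by (rule prime_idealI) (auto simp: ideal_in_def)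

section \<open>Localization\<close>

locale localization =
  fixes S :: "'a::comm_ring_1 set" and \<phi> :: "'a \<Rightarrow> 'b::comm_ring_1"
  assumes localization: "is_localization S \<phi>"
begin

lemma phi_1 [simp]: "\<phi> 1 = 1"
  and phi_add [simp]: "\<phi> (x + y) = \<phi> x + \<phi> y"
  and phi_mult [simp]: "\<phi> (x * y) = \<phi> x * \<phi> y"
  and phi_unit: "s \<in> S \<Longrightarrow> \<phi> s dvd 1"
  and ex_fraction: "\<exists>r. \<exists>s\<in>S. \<phi> s * b = \<phi> r"
  using localization unfolding is_localization_def by simp_all

lemma phi_0 [simp]: "\<phi> 0 = 0"
  using phi_add[of 0 0] by simp

lemma phi_uminus [simp]: "\<phi> (- x) = - \<phi> x"
  using phi_add[of x "- x"] by (simp add: add_eq_0_iff)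

lemma phi_sum: "finite K \<Longrightarrow> \<phi> (sum f K) = (\<Sum>i\<in>K. \<phi> (f i))"
  by (induction K rule: finite_induct) auto

lemma phi_not_mem_proper_ideal:
  assumes "is_ideal L" "1 \<notin> L" "s \<in> S"
  shows "\<phi> s \<notin> L"
proof
  assume "\<phi> s \<in> L"
  obtain u where "1 = \<phi> s * u" using phi_unit[OF assms(3)] by (auto elim: dvdE)
  then show False using ideal_mult_right_mem[OF assms(1) \<open>\<phi> s \<in> L\<close>] assms(2) by metis
qed

lemma ideal_vimage: assumes "is_ideal L" shows "is_ideal (\<phi> -` L)"
  unfolding ideal_in_def using is_idealD[OF assms] by auto

lemma prime_ideal_vimage: assumes Q: "prime_ideal Q" shows "prime_ideal (\<phi> -` Q)"
proof (rule prime_idealI)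
  show "is_ideal (\<phi> -` Q)" using ideal_vimage[OF prime_idealD(1)[OF Q]] .
qed (use prime_idealD(2,3)[OF Q] in auto)

lemma vimage_prime_disjoint: assumes "prime_ideal Q" shows "\<phi> -` Q \<inter> S = {}"
  using phi_not_mem_proper_ideal[OF prime_idealD(1,2)[OF assms]] by blast

lemma vimage_psubset:
  assumes Q1: "prime_ideal Q1" and Q2: "prime_ideal Q2" and "Q1 \<subset> Q2"
  shows "\<phi> -` Q1 \<subset> \<phi> -` Q2"
proof -
  obtain b where b: "b \<in> Q2" "b \<notin> Q1" using assms(3) by blast
  obtain r s where rs: "s \<in> S" "\<phi> s * b = \<phi> r" using ex_fraction by blast
  have "\<phi> r \<in> Q2" using rs(2) is_idealD(4)[OF prime_idealD(1)[OF Q2] b(1)] by metis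
  moreover have "\<phi> s \<notin> Q1" using phi_not_mem_proper_ideal[OF prime_idealD(1,2)[OF Q1] rs(1)] .
  then have "\<phi> r \<notin> Q1" using rs(2) prime_idealD(3)[OF Q1, of "\<phi> s" b] b(2) by auto
  ultimately show ?thesis using assms(3) by blast
qed

lemma prime_chain_to_vimage:
  assumes "prime_chain_to n Q"
  shows "prime_chain_to n (\<phi> -` Q)"
proof -
  obtain C where C: "\<forall>i\<le>n. prime_ideal (C i)" "\<forall>i<n. C i \<subset> C (Suc i)" "C n = Q"
    using assms unfolding prime_chain_to_def by blast
  show ?thesis unfolding prime_chain_to_def
    by (intro exI[of _ "\<lambda>i. \<phi> -` C i"]) (use C prime_ideal_vimage vimage_psubset in auto)
qed

lemma vimage_loc_set_maximal:
  assumes S1: "1 \<in> S" and M: "maximal_ideal M" and L: "is_ideal (loc_set S \<phi> M)" "1 \<notin> loc_set S \<phi> M"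
  shows "\<phi> -` loc_set S \<phi> M = M"
proof -
  have "M \<subseteq> \<phi> -` loc_set S \<phi> M" unfolding loc_set_def using S1 by force
  moreover have "1 \<notin> \<phi> -` loc_set S \<phi> M" using L(2) by simp
  then have "\<phi> -` loc_set S \<phi> M \<noteq> UNIV" by blast
  ultimately show ?thesis using M ideal_vimage[OF L(1)] unfolding maximal_ideal_in_def by blast
qed

end

locale graded_localization = graded G + localization S \<phi>
  for G :: "nat \<Rightarrow> 'a::idom set" and S and \<phi> :: "'a \<Rightarrow> 'b::comm_ring_1" +
  assumes one_mem_S: "1 \<in> S"
    and S_meets_maximal: "\<And>m. maximal_ideal_in (G 0) m \<Longrightarrow> S \<inter> m \<noteq> {}"
begin

lemma hom_decomp_phi_hcomp: "hom_decomp (\<lambda>i. loc_set S \<phi> (G i)) (\<phi> x) (\<lambda>i. \<phi> (hcomp x i))"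
  unfolding hom_decomp_def
proof (intro conjI allI)
  show "\<phi> (hcomp x i) \<in> loc_set S \<phi> (G i)" for i
    unfolding loc_set_def using one_mem_S hcomp_mem
    by (intro CollectI bexI[of _ "hcomp x i"] bexI[of _ 1]) simp_all
  obtain N where N: "\<forall>i\<ge>N. hcomp x i = 0" using hcomp_eventually_zero by blast
  then have zero: "\<forall>i\<ge>N. \<phi> (hcomp x i) = 0" by simp
  then show "finite {i. \<phi> (hcomp x i) \<noteq> 0}"
    using support_subset_lessThan[OF zero] finite_subset finite_lessThan by blast
  have "\<phi> x = (\<Sum>i<N. \<phi> (hcomp x i))" using arg_cong[OF sum_hcomp[OF N], of \<phi>] by (simp add: phi_sum)
  then show "\<phi> x = (\<Sum>i\<in>{i. \<phi> (hcomp x i) \<noteq> 0}. \<phi> (hcomp x i))"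
    using sum_support_eq_sum_lessThan[OF zero] by simp
qed

lemma not_homogeneous_maximal_loc_set:
  assumes M: "maximal_ideal M"
  shows "\<not> (homogeneous_ideal (\<lambda>i. loc_set S \<phi> (G i)) (loc_set S \<phi> M) \<and> maximal_ideal (loc_set S \<phi> M))"
proof
  let ?L = "loc_set S \<phi> M"
  assume L: "homogeneous_ideal (\<lambda>i. loc_set S \<phi> (G i)) ?L \<and> maximal_ideal ?L"
  then have idL: "is_ideal ?L" and "?L \<noteq> UNIV" unfolding maximal_ideal_in_def by blast+
  then have L1: "1 \<notin> ?L" using is_idealD(4)[OF idL, of 1] by auto
  have vimage_L: "\<phi> -` ?L = M" using vimage_loc_set_maximal[OF one_mem_S M idL L1] .
  have "hcomp x i \<in> M" if "x \<in> M" for x i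
  proof -
    have "\<phi> x \<in> ?L" using that vimage_L by blast
    then have "\<phi> (hcomp x i) \<in> ?L"
      using L hom_decomp_phi_hcomp[of x] unfolding homogeneous_ideal_def by blast
    then show ?thesis using vimage_L by blast
  qed
  then have "maximal_ideal_in (G 0) (M \<inter> G 0)" using maximal_ideal_in_G0_Int_if_homogeneous[OF M] by blast
  moreover have "S \<inter> M = {}" using phi_not_mem_proper_ideal[OF idL L1] vimage_L by blast
  ultimately show False using S_meets_maximal by blast
qed

lemma prime_chain_to_localization_less:
  assumes Q: "prime_chain_to n (Q :: 'b set)" and dim: "krull_dim TYPE('a) = enat d"
  shows "Suc n \<le> d"
proof -
  have chain: "prime_chain_to n (\<phi> -` Q)" using prime_chain_to_vimage[OF Q] .
  have "\<not> maximal_ideal_in (G 0) (\<phi> -` Q \<inter> G 0)"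
    using vimage_prime_disjoint[OF prime_chain_to_prime[OF Q]] S_meets_maximal by blast
  then obtain X :: "'a set" where "prime_chain_to (Suc n) X"
    using prime_chain_to_Suc_if_not_maximal[OF chain] by blast
  then show ?thesis using prime_chain_to_le_krull_dim dim by fastforce
qed

lemma krull_dim_localization_less:
  assumes dim: "krull_dim TYPE('a) = enat d"
  shows "krull_dim TYPE('b) < enat d"
proof -
  have "enat 1 \<le> enat d"
    using prime_chain_to_le_krull_dim[OF prime_chain_to_1_irrel_ext_zero[OF prime_ideal_zero]] dim by simp
  moreover have "krull_dim TYPE('b) \<le> enat (d - 1)"
    using prime_chain_to_localization_less[OF _ dim] by (intro krull_dim_le) fastforce
  ultimately show ?thesis by (simp add: order_le_less_trans)
qed

end

theorem mainTheorem1: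
  fixes G :: "nat \<Rightarrow> 'a::idom set"
    and S :: "'a set"
    and \<phi> :: "'a \<Rightarrow> 'b::comm_ring_1"
    and d :: nat
  assumes graded: "graded_ring G"
    and noeth: "noetherian_ring TYPE('a)"
    and dim: "krull_dim TYPE('a) = enat d"
    and mult: "multiplicative_set S"
    and S_sub: "S \<subseteq> G 0"
    and S_meets: "\<And>m. maximal_ideal_in (G 0) m \<Longrightarrow> S \<inter> m \<noteq> {}"
    and loc: "is_localization S \<phi>"
  shows "(\<forall>M. maximal_ideal M \<longrightarrow>
            \<not> (homogeneous_ideal (\<lambda>i. loc_set S \<phi> (G i)) (loc_set S \<phi> M)
               \<and> maximal_ideal (loc_set S \<phi> M)))
         \<and> krull_dim TYPE('b) < enat d"
proof -
  interpret graded_localization G S \<phi>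
    using graded loc mult S_meets unfolding multiplicative_set_def
    by unfold_locales blast+
  show ?thesis using not_homogeneous_maximal_loc_set krull_dim_localization_less[OF dim] by blast
qed

end
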